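(* Let $\Sigma_1,\Sigma_2$ be systems as in the context and let $\mathcal R=\ker([R_1\ \ -R_2])\subseteq\mathbb R^{n_1}\times\mathbb R^{n_2}$ (with $R_i\in\mathbb R^{r\times n_i}$) be a total stochastic bisimulation relation between $\Sigma_1$ and $\Sigma_2$. Then for every $(x_1^0,x_2^0)\in\mathcal R$, every input $\mathbf u$ and every $t\ge0$, the random vectors $R_1\mathbf x_1|_{x_1^0,\mathbf u}(t)$ and $R_2\mathbf x_2|_{x_2^0,\mathbf u}(t)$ have the same probability distribution.
   Context: For $i=1,2$, $\Sigma_i$ is the system $x_i(t+1)=A_ix_i(t)+B_iu(t)+G_iw_i(t)$, $y_i(t)=C_ix_i(t)+\nu_i(t)$, $t\in\mathbb{N}$, with $x_i\in\mathbb{R}^{n_i}$, $u\in\mathbb{R}^m$, $w_i\in\mathbb{R}^{l_i}$, $y_i,\nu_i\in\mathbb{R}^p$, where $(w_i(t))_t$ is i.i.d. with $w_i(t)\sim\mathcal N(\mu_i,I_{l_i})$, $(\nu_i(t))_t$ is i.i.d. with $\nu_i(t)\sim\mathcal N(0,\Psi_i)$, and the two sequences are mutually independent. For a deterministic initial state $x_i^0$ and deterministic input $\mathbf u:\mathbb N\to\mathbb R^m$, $\mathbf x_i|_{x_i^0,\mathbf u}(t)=A_i^tx_i^0+\sum_{\tau=0}^{t-1}A_i^{t-1-\tau}(B_iu(\tau)+G_iw_i(\tau))$, $\mathbf y_i|_{x_i^0,\mathbf u}(t)=C_i\mathbf x_i|_{x_i^0,\mathbf u}(t)+\nu_i(t)$;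 $\mathbf P(\cdot\mid x_i^0)$ is probability for the process started at $x_i^0$. Processes are stochastically equivalent ($\sim$) if all finite-dimensional joint distributions coincide. $\mathrm{supp}(v)=\{z:\mathbf P(v\in B_\rho(z))>0\ \forall\rho>0\}$. For a relation $\mathcal R$: $\mathcal R(X_1)=\{x_2:\exists x_1\in X_1,(x_1,x_2)\in\mathcal R\}$, $\mathcal R^{-1}(X_2)=\{x_1:\exists x_2\in X_2,(x_1,x_2)\in\mathcal R\}$; total means $\mathcal R(\mathbb R^{n_1})=\mathbb R^{n_2}$ and $\mathcal R^{-1}(\mathbb R^{n_2})=\mathbb R^{n_1}$. A subspace $\mathcal R\subseteq\mathbb R^{n_1}\times\mathbb R^{n_2}$ is a stochastic bisimulation relation between $\Sigma_1,\Sigma_2$ if for every $(x_1^0,x_2^0)\in\mathcal R$, every input $\mathbf u$ and every $t\in\mathbb N$: (i) for every measurable $X_1\subseteq\mathcal R^{-1}(\mathbb R^{n_2})$, $\mathbf P(\mathbf x_1|_{x_1^0,\mathbf u}(t)\in X_1\mid x_1^0)=\mathbf P(\mathbf x_2|_{x_2^0,\mathbf u}(t)\in\mathcal R(X_1\cap\mathrm{supp}(\mathbf x_1|_{x_1^0,\mathbf u}(t)))\mid x_2^0)$; (ii) for every measurable $X_2\subseteq\mathcal R(\mathbb R^{n_1})$, $\mathbf P(\mathbf x_2|_{x_2^0,\mathbf u}(t)\in X_2\mid x_2^0)=\mathbf P(\mathbf x_1|_{x_1^0,\mathbf u}(t)\in\mathcal R^{-1}(X_2\cap\mathrm{supp}(\mathbf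 x_2|_{x_2^0,\mathbf u}(t)))\mid x_1^0)$; (iii) $\mathbf y_1|_{x_1^0,\mathbf u}\sim\mathbf y_2|_{x_2^0,\mathbf u}$. *)

theory Defs
  imports "HOL-Probability.Probability"
begin

definition gaussian_vec ::
  "'w measure \<Rightarrow> ('w \<Rightarrow> real^'l) \<Rightarrow> real^'l \<Rightarrow> real^'l^'l \<Rightarrow> bool" where
  "gaussian_vec M X mu Sig \<longleftrightarrow>
     X \<in> borel_measurable M \<and> transpose Sig = Sig \<and>
     (\<forall>c::real^'l.
        (if c \<bullet> (Sig *v c) = 0
         then (AE \<omega> in M. c \<bullet> X \<omega> = c \<bullet> mu)
         else 0 < c \<bullet> (Sig *v c) \<and>
              distributed M lborel (\<lambda>\<omega>. c \<bullet> X \<omega>)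
                (\<lambda>x. ennreal (normal_density (c \<bullet> mu) (sqrt (c \<bullet> (Sig *v c))) x))))"

definition noise_model ::
  "'w measure \<Rightarrow> (nat \<Rightarrow> 'w \<Rightarrow> real^'l) \<Rightarrow> real^'l \<Rightarrow>
   (nat \<Rightarrow> 'w \<Rightarrow> real^'p) \<Rightarrow> real^'p^'p \<Rightarrow> bool" where
  "noise_model M w mu nu Psi \<longleftrightarrow>
     prob_space M \<and>
     (\<forall>t. gaussian_vec M (w t) mu (mat 1)) \<and>
     (\<forall>t. gaussian_vec M (nu t) 0 Psi) \<and>
     prob_space.indep_sets M
       (\<lambda>i. case i of
              Inl t \<Rightarrow> {w t -` A \<inter> space M | A. A \<in> sets (borel :: (real^'l) measure)}
            | Inr t \<Rightarrow> {nu t -` A \<inter> space M | A. A \<in> sets (borel :: (real^'p) measure)})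
       (UNIV :: (nat + nat) set)"

fun sys_state ::
  "real^'n^'n \<Rightarrow> real^'m^'n \<Rightarrow> real^'l^'n \<Rightarrow> real^'n \<Rightarrow> (nat \<Rightarrow> real^'m) \<Rightarrow>
   (nat \<Rightarrow> 'w \<Rightarrow> real^'l) \<Rightarrow> nat \<Rightarrow> 'w \<Rightarrow> real^'n" where
  "sys_state A B G x0 u w 0 \<omega> = x0"
| "sys_state A B G x0 u w (Suc t) \<omega> =
     A *v sys_state A B G x0 u w t \<omega> + B *v u t + G *v w t \<omega>"

definition sys_output ::
  "real^'n^'n \<Rightarrow> real^'m^'n \<Rightarrow> real^'l^'n \<Rightarrow> real^'n^'p \<Rightarrow> real^'n \<Rightarrow> (nat \<Rightarrow> real^'m) \<Rightarrow>
   (nat \<Rightarrow> 'w \<Rightarrow> real^'l) \<Rightarrow> (nat \<Rightarrow> 'w \<Rightarrow> real^'p) \<Rightarrow> nat \<Rightarrow> 'w \<Rightarrow> real^'p" where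
  "sys_output A B G C x0 u w nu t \<omega> = C *v sys_state A B G x0 u w t \<omega> + nu t \<omega>"

definition rv_supp :: "'w measure \<Rightarrow> ('w \<Rightarrow> 'a::metric_space) \<Rightarrow> 'a set" where
  "rv_supp M X = {z. \<forall>\<rho>>0. measure M {\<omega> \<in> space M. X \<omega> \<in> ball z \<rho>} > 0}"

definition stoch_equiv ::
  "'w1 measure \<Rightarrow> (nat \<Rightarrow> 'w1 \<Rightarrow> 'a::topological_space) \<Rightarrow>
   'w2 measure \<Rightarrow> (nat \<Rightarrow> 'w2 \<Rightarrow> 'a) \<Rightarrow> bool" where
  "stoch_equiv M1 Y1 M2 Y2 \<longleftrightarrow>
     (\<forall>J::nat set. finite J \<longrightarrow>
        distr M1 (PiM J (\<lambda>_. borel)) (\<lambda>\<omega>. \<lambda>t\<in>J. Y1 t \<omega>) =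
        distr M2 (PiM J (\<lambda>_. borel)) (\<lambda>\<omega>. \<lambda>t\<in>J. Y2 t \<omega>))"

definition rel_img :: "('a \<times> 'b) set \<Rightarrow> 'a set \<Rightarrow> 'b set" where
  "rel_img R X = {x2. \<exists>x1\<in>X. (x1, x2) \<in> R}"

definition rel_preimg :: "('a \<times> 'b) set \<Rightarrow> 'b set \<Rightarrow> 'a set" where
  "rel_preimg R X = {x1. \<exists>x2\<in>X. (x1, x2) \<in> R}"

definition rel_total :: "('a \<times> 'b) set \<Rightarrow> bool" where
  "rel_total R \<longleftrightarrow> rel_img R UNIV = UNIV \<and> rel_preimg R UNIV = UNIV"

definition stoch_bisim ::
  "'w1 measure \<Rightarrow> real^'n1^'n1 \<Rightarrow> real^'m^'n1 \<Rightarrow> real^'l1^'n1 \<Rightarrow> real^'n1^'p \<Rightarrow>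
     (nat \<Rightarrow> 'w1 \<Rightarrow> real^'l1) \<Rightarrow> (nat \<Rightarrow> 'w1 \<Rightarrow> real^'p) \<Rightarrow>
   'w2 measure \<Rightarrow> real^'n2^'n2 \<Rightarrow> real^'m^'n2 \<Rightarrow> real^'l2^'n2 \<Rightarrow> real^'n2^'p \<Rightarrow>
     (nat \<Rightarrow> 'w2 \<Rightarrow> real^'l2) \<Rightarrow> (nat \<Rightarrow> 'w2 \<Rightarrow> real^'p) \<Rightarrow>
   ((real^'n1) \<times> (real^'n2)) set \<Rightarrow> bool" where
  "stoch_bisim M1 A1 B1 G1 C1 w1 nu1 M2 A2 B2 G2 C2 w2 nu2 R \<longleftrightarrow>
     subspace R \<and>
     (\<forall>x10 x20 u t. (x10, x20) \<in> R \<longrightarrow>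
       (let X1t = sys_state A1 B1 G1 x10 u w1 t; X2t = sys_state A2 B2 G2 x20 u w2 t in
        (\<forall>X1 \<in> sets borel. X1 \<subseteq> rel_preimg R UNIV \<longrightarrow>
           measure M1 {\<omega> \<in> space M1. X1t \<omega> \<in> X1} =
           measure M2 {\<omega> \<in> space M2. X2t \<omega> \<in> rel_img R (X1 \<inter> rv_supp M1 X1t)}) \<and>
        (\<forall>X2 \<in> sets borel. X2 \<subseteq> rel_img R UNIV \<longrightarrow>
           measure M2 {\<omega> \<in> space M2. X2t \<omega> \<in> X2} =
           measure M1 {\<omega> \<in> space M1. X1t \<omega> \<in> rel_preimg R (X2 \<inter> rv_supp M2 X2t)}) \<and>
        stoch_equiv M1 (sys_output A1 B1 G1 C1 x10 u w1 nu1)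
                    M2 (sys_output A2 B2 G2 C2 x20 u w2 nu2)))"

end

theory Submission
  imports Defs
begin

text \<open>Fix a Borel set \<open>Y\<close>. Condition (i) of the bisimulation, applied to \<open>X\<^sub>1 = R\<^sub>1\<inverse>(Y)\<close>
(admissible because the relation is total), gives
\<open>P(R\<^sub>1 x\<^sub>1(t) \<in> Y) = P(x\<^sub>2(t) \<in> \<R>(R\<^sub>1\<inverse>(Y) \<inter> supp x\<^sub>1(t)))\<close>, and every \<open>x\<^sub>2\<close> related to a
point of \<open>R\<^sub>1\<inverse>(Y)\<close> has \<open>R\<^sub>2 x\<^sub>2 \<in> Y\<close>. Hence \<open>P(R\<^sub>1 x\<^sub>1(t) \<in> Y) \<le> P(R\<^sub>2 x\<^sub>2(t) \<in> Y)\<close> for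
every Borel \<open>Y\<close>; applied to the complement of \<open>Y\<close> this inequality reverses, since both sides
are probabilities, so the two laws coincide.\<close>

lemma borel_measurable_matrix_vector_mult:
  "f \<in> borel_measurable M \<Longrightarrow> (\<lambda>x. (A::real^'n^'m) *v f x) \<in> borel_measurable M"
  using borel_measurable_continuous_onI[OF linear_continuous_on[OF matrix_vector_mul_bounded_linear]]
  by (rule measurable_compose[rotated])

lemma sys_state_measurable:
  assumes "\<And>t. w t \<in> borel_measurable M"
  shows "sys_state A B G x0 u w t \<in> borel_measurable M"
proof (induction t)
  case (Suc t)
  have "(\<lambda>\<omega>. A *v sys_state A B G x0 u w t \<omega> + B *v u t + G *v w t \<omega>) \<in> borel_measurable M"
    by (intro borel_measurable_add borel_measurable_matrix_vector_mult Suc assms measurable_const) simp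
  then show ?case by simp
qed simp

lemma noise_model_prob_space: "noise_model M w mu nu Psi \<Longrightarrow> prob_space M"
  unfolding noise_model_def by (erule conjunct1)

lemma gaussian_vec_measurable: "gaussian_vec M X mu Sig \<Longrightarrow> X \<in> borel_measurable M"
  unfolding gaussian_vec_def by (erule conjunct1)

lemma noise_model_measurable:
  assumes "noise_model M w mu nu Psi"
  shows "w t \<in> borel_measurable M"
proof (rule gaussian_vec_measurable)
  show "gaussian_vec M (w t) mu (mat 1)"
    using assms by (simp add: noise_model_def)
qed

lemma rel_img_kernel_vimage_subset:
  "rel_img {(x1, x2). R1 *v x1 = R2 *v x2} ((\<lambda>x. R1 *v x) -` Y \<inter> S) \<subseteq> (\<lambda>x. R2 *v x) -` Y"
  by (auto simp: rel_img_def)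

lemma (in prob_space) distr_eqI_prob_le:
  assumes N: "prob_space N"
    and f: "f \<in> measurable M K" and g: "g \<in> measurable N K"
    and le: "\<And>A. A \<in> sets K \<Longrightarrow> prob (f -` A \<inter> space M) \<le> measure N (g -` A \<inter> space N)"
  shows "distr M K f = distr N K g"
proof -
  interpret P: prob_space "distr M K f" using f by (rule prob_space_distr)
  interpret Q: prob_space "distr N K g" using g by (rule prob_space.prob_space_distr[OF N])
  have le_distr: "P.prob A \<le> Q.prob A" if "A \<in> sets K" for A
    using le[OF that] by (simp only: measure_distr[OF f that] measure_distr[OF g that])
  have "P.prob A = Q.prob A" if A: "A \<in> sets K" for A
  proof (rule antisym)
    show "P.prob A \<le> Q.prob A" using le_distr[OF A] .
    have "P.prob (space K - A) \<le> Q.prob (space K - A)"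
      using A by (intro le_distr) auto
    then show "Q.prob A \<le> P.prob A"
      using A P.prob_compl[of A] Q.prob_compl[of A] by simp
  qed
  then show ?thesis
    by (intro measure_eqI) (simp_all add: P.emeasure_eq_measure Q.emeasure_eq_measure)
qed

theorem lemma2:
  fixes M1 :: "'w1 measure" and M2 :: "'w2 measure"
    and A1 :: "real^'n1^'n1" and B1 :: "real^'m^'n1" and G1 :: "real^'l1^'n1"
    and C1 :: "real^'n1^'p" and Psi1 :: "real^'p^'p" and mu1 :: "real^'l1"
    and w1 :: "nat \<Rightarrow> 'w1 \<Rightarrow> real^'l1" and nu1 :: "nat \<Rightarrow> 'w1 \<Rightarrow> real^'p"
    and A2 :: "real^'n2^'n2" and B2 :: "real^'m^'n2" and G2 :: "real^'l2^'n2"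
    and C2 :: "real^'n2^'p" and Psi2 :: "real^'p^'p" and mu2 :: "real^'l2"
    and w2 :: "nat \<Rightarrow> 'w2 \<Rightarrow> real^'l2" and nu2 :: "nat \<Rightarrow> 'w2 \<Rightarrow> real^'p"
    and R1 :: "real^'n1^'r" and R2 :: "real^'n2^'r"
  assumes noise1: "noise_model M1 w1 mu1 nu1 Psi1"
    and noise2: "noise_model M2 w2 mu2 nu2 Psi2"
    and total: "rel_total {(x1, x2). R1 *v x1 = R2 *v x2}"
    and bisim: "stoch_bisim M1 A1 B1 G1 C1 w1 nu1 M2 A2 B2 G2 C2 w2 nu2
                  {(x1, x2). R1 *v x1 = R2 *v x2}"
  shows "\<forall>x10 x20 (u :: nat \<Rightarrow> real^'m) t. R1 *v x10 = R2 *v x20 \<longrightarrow>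
           distr M1 borel (\<lambda>\<omega>. R1 *v sys_state A1 B1 G1 x10 u w1 t \<omega>) =
           distr M2 borel (\<lambda>\<omega>. R2 *v sys_state A2 B2 G2 x20 u w2 t \<omega>)"
proof (intro allI impI)
  fix x10 x20 u t
  assume related: "R1 *v x10 = R2 *v x20"
  let ?R = "{(x1, x2). R1 *v x1 = R2 *v x2}"
  let ?X1 = "sys_state A1 B1 G1 x10 u w1 t" and ?X2 = "sys_state A2 B2 G2 x20 u w2 t"
  interpret M1: prob_space M1 using noise1 by (rule noise_model_prob_space)
  interpret M2: prob_space M2 using noise2 by (rule noise_model_prob_space)
  have X1: "?X1 \<in> borel_measurable M1" and X2: "?X2 \<in> borel_measurable M2"
    by (intro sys_state_measurable noise_model_measurable[OF noise1] noise_model_measurable[OF noise2])+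
  have "rel_preimg ?R UNIV = UNIV"
    using total by (simp add: rel_total_def)
  then have bisim_forward: "\<And>X. X \<in> sets borel \<Longrightarrow>
      M1.prob {\<omega> \<in> space M1. ?X1 \<omega> \<in> X} =
      M2.prob {\<omega> \<in> space M2. ?X2 \<omega> \<in> rel_img ?R (X \<inter> rv_supp M1 ?X1)}"
    using bisim related unfolding stoch_bisim_def Let_def by blast
  show "distr M1 borel (\<lambda>\<omega>. R1 *v ?X1 \<omega>) = distr M2 borel (\<lambda>\<omega>. R2 *v ?X2 \<omega>)"
  proof (rule M1.distr_eqI_prob_le[OF M2.prob_space_axioms
        borel_measurable_matrix_vector_mult[OF X1] borel_measurable_matrix_vector_mult[OF X2]])
    fix Y :: "(real^'r) set" assume Y: "Y \<in> sets borel"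
    let ?Y1 = "(\<lambda>x. R1 *v x) -` Y"
    have "M1.prob ((\<lambda>\<omega>. R1 *v ?X1 \<omega>) -` Y \<inter> space M1) = M1.prob {\<omega> \<in> space M1. ?X1 \<omega> \<in> ?Y1}"
      by (simp add: vimage_def Int_def conj_commute)
    also have "\<dots> = M2.prob {\<omega> \<in> space M2. ?X2 \<omega> \<in> rel_img ?R (?Y1 \<inter> rv_supp M1 ?X1)}"
      using measurable_sets[OF borel_measurable_matrix_vector_mult[OF measurable_ident] Y]
      by (intro bisim_forward) simp
    also have "\<dots> \<le> M2.prob ((\<lambda>\<omega>. R2 *v ?X2 \<omega>) -` Y \<inter> space M2)"
    proof (rule M2.finite_measure_mono)
      show "(\<lambda>\<omega>. R2 *v ?X2 \<omega>) -` Y \<inter> space M2 \<in> M2.events"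
        using measurable_sets[OF borel_measurable_matrix_vector_mult[OF X2] Y] .
    qed (use rel_img_kernel_vimage_subset in blast)
    finally show "M1.prob ((\<lambda>\<omega>. R1 *v ?X1 \<omega>) -` Y \<inter> space M1)
        \<le> M2.prob ((\<lambda>\<omega>. R2 *v ?X2 \<omega>) -` Y \<inter> space M2)" .
  qed
qed

end
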